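(* $H\mathfrak P'=H\mathcal P=\mathcal P\setminus\{(1,0,1)\}$, where for a set $X$ of matrices and a set $Y$ of triples, $XY=\{M(x,y,z)^t:M\in X,\ (x,y,z)\in Y\}$.
   Context: Let $\mathfrak P=\{(x,y,z)\in\mathbb Z_{>0}^3: 2\mid y,\ \gcd(x,y,z)=1,\ x^2+y^2=z^2\}$ (primitive Pythagorean triples), $\mathfrak P'=\mathfrak P\cup\{(1,0,1)\}$, and $\mathcal P=\{(x,y,z)\in\mathfrak P:\min\{x,y\}<z/2\}\cup\{(1,0,1)\}$. Let $A=\begin{pmatrix}1&-2&2\\2&-1&2\\2&-2&3\end{pmatrix}$, $B=\begin{pmatrix}1&2&2\\2&1&2\\2&2&3\end{pmatrix}$, $C=\begin{pmatrix}-1&2&2\\-2&1&2\\-2&2&3\end{pmatrix}$, and let $G$ be the monoid generated by $I_3,A,B,C$ under matrix multiplication, acting on triples as column vectors. Let $H$ be the set of all matrices of the forms $A^2NB$, $A^kB$, $ABNB$, $C^2NB$, $C^kB$, $CBNB$, $(AC)^kA^2NB$, $(AC)^kABNB$, $(AC)^kAB$, $(CA)^kC^2NB$, $(CA)^kCBNB$, $(CA)^kCB$, with $N\in G$ and $k\in\mathbb Z_{>0}$. *)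

theory Defs
  imports "HOL-Analysis.Analysis"
begin

type_synonym mat3 = "int^3^3"
type_synonym trip = "int^3"

definition trip :: "int \<Rightarrow> int \<Rightarrow> int \<Rightarrow> trip" where
  "trip x y z = vector [x, y, z]"

definition PPT :: "trip set" where
  "PPT = {trip x y z | x y z. x > 0 \<and> y > 0 \<and> z > 0 \<and> even y \<and>
           gcd x (gcd y z) = 1 \<and> x^2 + y^2 = z^2}"

definition PPT' :: "trip set" where
  "PPT' = PPT \<union> {trip 1 0 1}"

text \<open>min(x,y) < z/2, written as 2 * min x y < z over the integers.\<close>
definition PPTsmall :: "trip set" where
  "PPTsmall = {trip x y z | x y z. trip x y z \<in> PPT \<and> 2 * min x y < z} \<union> {trip 1 0 1}"

definition matA :: mat3 where
  "matA = vector [vector [1, -2, 2], vector [2, -1, 2], vector [2, -2, 3]]"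
definition matB :: mat3 where
  "matB = vector [vector [1, 2, 2], vector [2, 1, 2], vector [2, 2, 3]]"
definition matC :: mat3 where
  "matC = vector [vector [-1, 2, 2], vector [-2, 1, 2], vector [-2, 2, 3]]"

inductive_set monG :: "mat3 set" where
  idG: "mat 1 \<in> monG"
| AG: "N \<in> monG \<Longrightarrow> N ** matA \<in> monG"
| BG: "N \<in> monG \<Longrightarrow> N ** matB \<in> monG"
| CG: "N \<in> monG \<Longrightarrow> N ** matC \<in> monG"

primrec mpow :: "mat3 \<Rightarrow> nat \<Rightarrow> mat3" where
  "mpow M 0 = mat 1"
| "mpow M (Suc k) = M ** mpow M k"

definition setH :: "mat3 set" where
  "setH = {M. \<exists>N \<in> monG. \<exists>k::nat. k > 0 \<and>
     (M = matA ** matA ** N ** matB \<or>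
      M = mpow matA k ** matB \<or>
      M = matA ** matB ** N ** matB \<or>
      M = matC ** matC ** N ** matB \<or>
      M = mpow matC k ** matB \<or>
      M = matC ** matB ** N ** matB \<or>
      M = mpow (matA ** matC) k ** matA ** matA ** N ** matB \<or>
      M = mpow (matA ** matC) k ** matA ** matB ** N ** matB \<or>
      M = mpow (matA ** matC) k ** matA ** matB \<or>
      M = mpow (matC ** matA) k ** matC ** matC ** N ** matB \<or>
      M = mpow (matC ** matA) k ** matC ** matB ** N ** matB \<or>
      M = mpow (matC ** matA) k ** matC ** matB)}"

definition act_set :: "mat3 set \<Rightarrow> trip set \<Rightarrow> trip set" where
  "act_set X Y = {M *v v | M v. M \<in> X \<and> v \<in> Y}"

end

theory Submission
  imports Defs
begin

text \<open>\<open>A\<close>, \<open>B\<close>, \<open>C\<close> are Berggren's matrices. Every primitive triple \<open>w\<close> is \<open>X u\<close> with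
  \<open>X \<in> {A, B, C}\<close> and \<open>u \<in> PPT'\<close> of smaller hypotenuse (\<open>u\<close> is \<open>B\<^sup>-\<^sup>1 w\<close> up to the signs of its
  legs), hence \<open>PPT = G B (1,0,1)\<close>. Whether a leg is shorter than half the hypotenuse is
  controlled by the leading letter: \<open>B u\<close> has no short leg, \<open>A u\<close> has no short even leg and has a
  short odd leg iff \<open>u\<close> has no short even leg, and symmetrically for \<open>C\<close> with odd and even
  exchanged. Descending twice from a triple with a short odd leg thus shows that it is
  \<open>(AC)\<^sup>k A T (1,0,1)\<close> with \<open>T \<in> {B, ANB, BNB}\<close>, and conversely these words map \<open>PPT'\<close> to
  triples with a short odd leg; symmetrically with \<open>A\<close> and \<open>C\<close> exchanged. These two families
  of words make up exactly \<open>H\<close>.\<close>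

lemma trip_eq_iff: "trip a b c = trip a' b' c' \<longleftrightarrow> a = a' \<and> b = b' \<and> c = c'"
  unfolding trip_def by (auto simp: vec_eq_iff forall_3)

lemma trip_nth [simp]: "trip a b c $ 1 = a" "trip a b c $ 2 = b" "trip a b c $ 3 = c"
  unfolding trip_def by simp_all

lemma trip_components: "trip (v$1) (v$2) (v$3) = v"
  unfolding trip_def by (auto simp: vec_eq_iff forall_3)

lemma mem_trip_Collect: "v \<in> {trip x y z | x y z. P x y z} \<longleftrightarrow> P (v$1) (v$2) (v$3)"
proof
  show "v \<in> {trip x y z | x y z. P x y z}" if "P (v$1) (v$2) (v$3)"
    using that trip_components[of v] by force
qed auto

lemma matrix_vector_mult_trip:
  "(vector [vector [a, b, c], vector [d, e, f], vector [g, h, i]] :: mat3) *v trip x y z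
     = trip (a*x + b*y + c*z) (d*x + e*y + f*z) (g*x + h*y + i*z)"
  unfolding trip_def by (simp add: vec_eq_iff forall_3 matrix_vector_mult_def sum_3)

lemma matA_trip: "matA *v trip x y z = trip (x - 2*y + 2*z) (2*x - y + 2*z) (2*x - 2*y + 3*z)"
  unfolding matA_def matrix_vector_mult_trip by simp

lemma matB_trip: "matB *v trip x y z = trip (x + 2*y + 2*z) (2*x + y + 2*z) (2*x + 2*y + 3*z)"
  unfolding matB_def matrix_vector_mult_trip by simp

lemma matC_trip: "matC *v trip x y z = trip (-x + 2*y + 2*z) (-2*x + y + 2*z) (-2*x + 2*y + 3*z)"
  unfolding matC_def matrix_vector_mult_trip by simp

definition gcd3 :: "trip \<Rightarrow> int" where
  "gcd3 v = gcd (v$1) (gcd (v$2) (v$3))"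

lemma gcd3_trip [simp]: "gcd3 (trip x y z) = gcd x (gcd y z)"
  by (simp add: gcd3_def)

lemma gcd3_dvd_matrix_vector_mult: "gcd3 v dvd gcd3 (M *v v)"
proof -
  have "gcd3 v dvd v$j" for j :: 3
    using exhaust_3[of j] by (auto simp: gcd3_def intro: dvd_trans)
  then have "gcd3 v dvd (M *v v)$i" for i
    by (auto simp: matrix_vector_mult_def intro!: dvd_sum)
  then show ?thesis
    by (simp add: gcd3_def)
qed

lemma gcd3_eq_1_if_image: "gcd3 (M *v v) = 1 \<Longrightarrow> gcd3 v = 1"
  using gcd3_dvd_matrix_vector_mult[of v M] by (simp add: gcd3_def)

section \<open>Primitive triples and the Berggren matrices\<close>

lemma PPT_iff: "trip x y z \<in> PPT \<longleftrightarrow>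
    x > 0 \<and> y > 0 \<and> z > 0 \<and> even y \<and> gcd x (gcd y z) = 1 \<and> x^2 + y^2 = z^2"
  unfolding PPT_def by (auto simp: trip_eq_iff)

lemma PPTE:
  assumes "v \<in> PPT"
  obtains x y z where "v = trip x y z" "x > 0" "y > 0" "z > 0" "even y"
    "gcd x (gcd y z) = 1" "x^2 + y^2 = z^2"
  using assms trip_components[of v] PPT_iff by metis

lemma root_not_in_PPT: "trip 1 0 1 \<notin> PPT"
  by (simp add: PPT_iff)

lemma PPT'_iff: "v \<in> PPT' \<longleftrightarrow> v \<in> PPT \<or> v = trip 1 0 1"
  unfolding PPT'_def by auto

lemma PPT_bounds:
  assumes "trip x y z \<in> PPT"
  shows "x < z" "y < z" "z < x + y" "2*x + 2*y < 3*z" "odd x" "odd z"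
proof -
  have pos: "x > 0" "y > 0" "z > 0" and "even y" "gcd x (gcd y z) = 1"
    and pyth: "x^2 + y^2 = z^2"
    using assms by (auto simp: PPT_iff)
  have "x*x > 0" "y*y > 0" "x*y > 0" "(x - y)*(x - y) \<ge> 0"
    using pos by simp_all
  then have sq: "x^2 < z^2" "y^2 < z^2" "z^2 < (x + y)^2" "(2*x + 2*y)^2 < (3*z)^2"
    using pyth by (simp_all add: power2_eq_square algebra_simps)
  show "x < z" "y < z" "z < x + y" "2*x + 2*y < 3*z"
    using power2_less_imp_less[OF sq(1)] power2_less_imp_less[OF sq(2)]
      power2_less_imp_less[OF sq(3)] power2_less_imp_less[OF sq(4)] pos
    by simp_all
  show "odd x"
  proof
    assume "even x"
    with \<open>even y\<close> pyth have "even z"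
      by (metis even_add even_power zero_less_numeral)
    with \<open>even x\<close> \<open>even y\<close> \<open>gcd x (gcd y z) = 1\<close> show False
      by (metis gcd_greatest odd_one)
  qed
  with \<open>even y\<close> pyth show "odd z"
    by (metis even_add even_power)
qed

text \<open>Each of \<open>A, B, C\<close> has the integer inverse \<open>J M\<^sup>T J\<close> with \<open>J = diag(1, 1, -1)\<close>,
  so it preserves primitivity.\<close>

lemma Berggren_PPT:
  assumes "M \<in> {matA, matB, matC}" "v \<in> PPT"
  shows "M *v v \<in> PPT"
proof -
  obtain x y z where v: "v = trip x y z" and pos: "x > 0" "y > 0" "z > 0" and "even y"
    and gcd: "gcd3 v = 1" and pyth: "x^2 + y^2 = z^2"
    using assms(2) by (elim PPTE) auto
  have "x < z" "y < z"
    using PPT_bounds assms(2) v by auto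
  from assms(1) consider "M = matA" | "M = matB" | "M = matC"
    by blast
  then show ?thesis
  proof cases
    case 1
    have "vector [vector [1, 2, -2], vector [-2, -1, 2], vector [-2, -2, 3]] *v (M *v v) = v"
      by (simp add: 1 v matA_trip matrix_vector_mult_trip trip_eq_iff algebra_simps)
    then have "gcd3 (M *v v) = 1"
      using gcd gcd3_eq_1_if_image by metis
    with pos \<open>y < z\<close> \<open>even y\<close> pyth show ?thesis
      by (simp add: 1 v matA_trip PPT_iff power2_eq_square algebra_simps)
  next
    case 2
    have "vector [vector [1, 2, -2], vector [2, 1, -2], vector [-2, -2, 3]] *v (M *v v) = v"
      by (simp add: 2 v matB_trip matrix_vector_mult_trip trip_eq_iff algebra_simps)
    then have "gcd3 (M *v v) = 1"
      using gcd gcd3_eq_1_if_image by metis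
    with pos \<open>even y\<close> pyth show ?thesis
      by (simp add: 2 v matB_trip PPT_iff power2_eq_square algebra_simps)
  next
    case 3
    have "vector [vector [-1, -2, 2], vector [2, 1, -2], vector [-2, -2, 3]] *v (M *v v) = v"
      by (simp add: 3 v matC_trip matrix_vector_mult_trip trip_eq_iff algebra_simps)
    then have "gcd3 (M *v v) = 1"
      using gcd gcd3_eq_1_if_image by metis
    with pos \<open>x < z\<close> \<open>even y\<close> pyth show ?thesis
      by (simp add: 3 v matC_trip PPT_iff power2_eq_square algebra_simps)
  qed
qed

lemma Berggren_root:
  "matA *v trip 1 0 1 = trip 3 4 5" "matB *v trip 1 0 1 = trip 3 4 5" "matC *v trip 1 0 1 = trip 1 0 1"
  by (simp_all add: matA_trip matB_trip matC_trip)

lemma matB_PPT': "v \<in> PPT' \<Longrightarrow> matB *v v \<in> PPT"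
  using Berggren_PPT[of matB v] by (auto simp: PPT'_iff Berggren_root PPT_iff gcd_non_0_int)

lemma PPT'_intro:
  assumes "x > 0" "y \<ge> 0" "z > 0" "even y" "gcd x (gcd y z) = 1" "x^2 + y^2 = z^2"
  shows "trip x y z \<in> PPT'"
proof (cases "y = 0")
  case True
  with assms have "x = z"
    by auto
  with True assms(3,5) have "x = 1"
    by simp
  with True \<open>x = z\<close> show ?thesis
    by (simp add: PPT'_iff)
next
  case False
  with assms show ?thesis
    by (simp add: PPT'_iff PPT_iff)
qed

lemma PPT_descent:
  assumes "w \<in> PPT"
  obtains u where "u \<in> PPT'" "u$3 < w$3" "w = matA *v u \<or> w = matB *v u \<or> w = matC *v u"
proof -
  obtain x y z where w: "w = trip x y z" and pos: "x > 0" "y > 0" "z > 0" and "even y"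
    and gcd: "gcd3 w = 1" and pyth: "x^2 + y^2 = z^2"
    using assms by (elim PPTE) auto
  note bounds = PPT_bounds[OF assms[unfolded w]]
  define p where "p = x + 2*y - 2*z"
  define q where "q = 2*x + y - 2*z"
  define r where "r = 3*z - 2*x - 2*y"
  have parent: "w = matB *v trip p q r"
    by (simp add: w matB_trip trip_eq_iff p_def q_def r_def)
  have "0 < r" "r < z"
    using bounds by (auto simp: r_def)
  have "odd p" "even q"
    using bounds(5) \<open>even y\<close> by (auto simp: p_def q_def)
  have "gcd p (gcd q r) = 1"
    using gcd gcd3_eq_1_if_image parent by fastforce
  have "p^2 + q^2 = r^2"
    using pyth by (simp add: p_def q_def r_def power2_eq_square algebra_simps)
  \<comment> \<open>\<open>p < 0\<close> means \<open>x < 2(z - y)\<close>, and multiplying by \<open>z + y\<close> gives \<open>z + y < 2x\<close>;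
    likewise \<open>q < 0\<close> gives \<open>z + x < 2y\<close>, and together they contradict \<open>2x + 2y < 3z\<close>.\<close>
  have not_both_neg: "\<not> (p < 0 \<and> q < 0)"
  proof
    assume neg: "p < 0 \<and> q < 0"
    have sq: "x*x + y*y = z*z"
      using pyth by (simp add: power2_eq_square)
    have "x * (z + y) < 2 * (z - y) * (z + y)"
      using neg pos by (intro mult_strict_right_mono) (auto simp: p_def)
    also have "\<dots> = x * (2 * x)"
      using sq by (simp add: algebra_simps)
    finally have "z + y < 2 * x"
      using pos by (simp add: mult_less_cancel_left_pos)
    have "y * (z + x) < 2 * (z - x) * (z + x)"
      using neg pos by (intro mult_strict_right_mono) (auto simp: q_def)
    also have "\<dots> = y * (2 * y)"
      using sq by (simp add: algebra_simps)
    finally have "z + x < 2 * y"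
      using pos by (simp add: mult_less_cancel_left_pos)
    with \<open>z + y < 2 * x\<close> bounds(4) pos show False
      by linarith
  qed
  define u where "u = trip \<bar>p\<bar> \<bar>q\<bar> r"
  have "u \<in> PPT'"
    unfolding u_def
    using \<open>odd p\<close> \<open>even q\<close> \<open>0 < r\<close> \<open>gcd p (gcd q r) = 1\<close> \<open>p^2 + q^2 = r^2\<close>
    by (intro PPT'_intro) auto
  moreover have "w = matA *v u \<or> w = matB *v u \<or> w = matC *v u"
    using parent not_both_neg \<open>odd p\<close> unfolding u_def
    by (cases "p > 0"; cases "q \<ge> 0") (auto simp: matA_trip matB_trip matC_trip trip_eq_iff)
  ultimately show ?thesis
    using that \<open>r < z\<close> by (simp add: u_def w)
qed

lemma monG_mult:
  assumes "M \<in> monG" "N \<in> monG"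
  shows "M ** N \<in> monG"
  using assms(2,1) by (induction N rule: monG.induct) (auto simp: matrix_mul_assoc intro: monG.intros)

lemma Berggren_in_monG: "matA \<in> monG" "matB \<in> monG" "matC \<in> monG"
  using monG.intros(2-4)[OF monG.idG] by simp_all

lemma mpow_in_monG: "M \<in> monG \<Longrightarrow> mpow M k \<in> monG"
  by (induction k) (auto intro: monG_mult monG.idG)

lemma monG_PPT: "N \<in> monG \<Longrightarrow> v \<in> PPT \<Longrightarrow> N *v v \<in> PPT"
  by (induction N arbitrary: v rule: monG.induct)
    (auto simp flip: matrix_vector_mul_assoc intro: Berggren_PPT)

lemma PPT_monG_orbit: "w \<in> PPT \<Longrightarrow> \<exists>N\<in>monG. w = (N ** matB) *v trip 1 0 1"
proof (induction "nat (w$3)" arbitrary: w rule: less_induct)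
  case less
  then obtain u X where u: "u \<in> PPT'" "u$3 < w$3" and X: "X \<in> {matA, matB, matC}" "w = X *v u"
    by (elim PPT_descent) blast+
  show ?case
  proof (cases "u = trip 1 0 1")
    case True
    with X less.prems root_not_in_PPT have "w = matB *v trip 1 0 1"
      by (auto simp: matA_trip matB_trip matC_trip)
    then show ?thesis
      using monG.idG by force
  next
    case False
    with u have "u \<in> PPT"
      by (simp add: PPT'_iff)
    moreover have "nat (u$3) < nat (w$3)"
      using u \<open>u \<in> PPT\<close> by (auto elim: PPTE)
    ultimately obtain N where "N \<in> monG" "u = (N ** matB) *v trip 1 0 1"
      using less.hyps by blast
    with X show ?thesis
      by (intro bexI[of _ "X ** N"])
        (auto simp: matrix_vector_mul_assoc matrix_mul_assoc intro: monG_mult Berggren_in_monG)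
  qed
qed

section \<open>Legs shorter than half the hypotenuse\<close>

definition PPT_short_odd :: "trip set" where
  "PPT_short_odd = {v \<in> PPT. 2 * v$1 < v$3}"

definition PPT_short_even :: "trip set" where
  "PPT_short_even = {v \<in> PPT. 2 * v$2 < v$3}"

lemma PPTsmall_minus_root: "PPTsmall - {trip 1 0 1} = PPT_short_odd \<union> PPT_short_even"
proof (rule set_eqI)
  fix v
  show "v \<in> PPTsmall - {trip 1 0 1} \<longleftrightarrow> v \<in> PPT_short_odd \<union> PPT_short_even"
    unfolding PPTsmall_def Un_iff Diff_iff mem_trip_Collect
    using root_not_in_PPT by (auto simp: trip_components PPT_short_odd_def PPT_short_even_def)
qed

text \<open>\<open>2 (A v)\<^sub>1 - (A v)\<^sub>3 = v\<^sub>3 - 2 v\<^sub>2\<close> (and symmetrically for \<open>C\<close>), which never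
  vanishes as the hypotenuse is odd.\<close>

lemma matA_short_odd_iff:
  assumes "v \<in> PPT"
  shows "matA *v v \<in> PPT_short_odd \<longleftrightarrow> v \<notin> PPT_short_even"
proof -
  obtain x y z where v: "v = trip x y z"
    using trip_components by metis
  with assms have "odd z"
    using PPT_bounds by blast
  then have "2 * y \<noteq> z"
    by auto
  with assms v Berggren_PPT[of matA v] show ?thesis
    by (auto simp: PPT_short_odd_def PPT_short_even_def matA_trip)
qed

lemma matC_short_even_iff:
  assumes "v \<in> PPT"
  shows "matC *v v \<in> PPT_short_even \<longleftrightarrow> v \<notin> PPT_short_odd"
proof -
  obtain x y z where v: "v = trip x y z"
    using trip_components by metis
  with assms have "odd z"
    using PPT_bounds by blast
  then have "2 * x \<noteq> z"
    by auto
  with assms v Berggren_PPT[of matC v] show ?thesis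
    by (auto simp: PPT_short_odd_def PPT_short_even_def matC_trip)
qed

section \<open>The two halves of \<open>H\<close>\<close>

definition Hbase :: "mat3 \<Rightarrow> mat3 set" where
  "Hbase Z = insert (Z ** matB) {Z ** X ** N ** matB | X N. X \<in> {Z, matB} \<and> N \<in> monG}"

definition Hbranch :: "mat3 \<Rightarrow> mat3 \<Rightarrow> mat3 set" where
  "Hbranch Z W = {mpow (Z ** W) k ** T | k T. T \<in> Hbase Z}"

lemma Hbase_subset_Hbranch: "Hbase Z \<subseteq> Hbranch Z W"
  unfolding Hbranch_def by (force intro: exI[of _ 0])

lemma Hbranch_subset_setH: "Hbranch matA matC \<union> Hbranch matC matA \<subseteq> setH"
proof
  fix M
  assume "M \<in> Hbranch matA matC \<union> Hbranch matC matA"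
  then obtain Z W k T where ZW: "(Z, W) \<in> {(matA, matC), (matC, matA)}"
    and M: "M = mpow (Z ** W) k ** T" and "T \<in> Hbase Z"
    by (auto simp: Hbranch_def)
  then obtain N where "N \<in> monG" "T = Z ** matB \<or> (\<exists>X\<in>{Z, matB}. T = Z ** X ** N ** matB)"
    using monG.idG by (auto simp: Hbase_def)
  with ZW M show "M \<in> setH"
    unfolding setH_def
    by (intro CollectI bexI[OF _ \<open>N \<in> monG\<close>] exI[of _ "max 1 k"])
      (cases k; auto simp: matrix_mul_assoc)
qed

lemma mpow_matB_Hbase:
  assumes "k > 0" "Z \<in> monG"
  shows "mpow Z k ** matB \<in> Hbase Z"
proof (cases "k = 1")
  case True
  then show ?thesis
    by (simp add: Hbase_def)
next
  case False
  with assms(1) obtain j where "k = Suc (Suc j)"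
    by (metis One_nat_def gr0_implies_Suc not0_implies_Suc)
  with mpow_in_monG[OF assms(2)] show ?thesis
    by (auto simp: Hbase_def matrix_mul_assoc)
qed

lemma setH_subset_Hbranch: "setH \<subseteq> Hbranch matA matC \<union> Hbranch matC matA"
proof
  fix M
  assume "M \<in> setH"
  then obtain N k where "N \<in> monG" "k > 0" and M:
     "M = matA ** matA ** N ** matB \<or>
      M = mpow matA k ** matB \<or>
      M = matA ** matB ** N ** matB \<or>
      M = matC ** matC ** N ** matB \<or>
      M = mpow matC k ** matB \<or>
      M = matC ** matB ** N ** matB \<or>
      M = mpow (matA ** matC) k ** matA ** matA ** N ** matB \<or>
      M = mpow (matA ** matC) k ** matA ** matB ** N ** matB \<or>
      M = mpow (matA ** matC) k ** matA ** matB \<or>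
      M = mpow (matC ** matA) k ** matC ** matC ** N ** matB \<or>
      M = mpow (matC ** matA) k ** matC ** matB ** N ** matB \<or>
      M = mpow (matC ** matA) k ** matC ** matB"
    unfolding setH_def by blast
  have branch: "mpow (Z ** W) j ** T \<in> Hbranch Z W" if "T \<in> Hbase Z" for Z W T j
    using that by (auto simp: Hbranch_def)
  have "Z ** matB \<in> Hbase Z" "Z ** Z ** N ** matB \<in> Hbase Z" "Z ** matB ** N ** matB \<in> Hbase Z" for Z
    using \<open>N \<in> monG\<close> by (auto simp: Hbase_def)
  with M mpow_matB_Hbase[OF \<open>k > 0\<close>] Berggren_in_monG
  show "M \<in> Hbranch matA matC \<union> Hbranch matC matA"
    by (auto simp: matrix_mul_assoc[symmetric] intro: branch Hbase_subset_Hbranch[THEN subsetD])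
qed

lemma Hbranch_step:
  assumes "M \<in> Hbranch Z W"
  shows "Z ** W ** M \<in> Hbranch Z W"
proof -
  from assms obtain k T where "M = mpow (Z ** W) k ** T" "T \<in> Hbase Z"
    by (auto simp: Hbranch_def)
  then have "Z ** W ** M = mpow (Z ** W) (Suc k) ** T" "T \<in> Hbase Z"
    by (simp_all add: matrix_mul_assoc)
  then show ?thesis
    unfolding Hbranch_def by blast
qed

lemma mpow_invariant:
  assumes "\<And>v. v \<in> S \<Longrightarrow> M *v v \<in> S" "v \<in> S"
  shows "mpow M k *v v \<in> S"
  by (induction k) (auto simp: assms simp flip: matrix_vector_mul_assoc)

text \<open>The two mirror-image halves of \<open>H\<close>: words led by \<open>Z\<close> and alternating with \<open>W\<close> produce
  triples in \<open>S\<close>; \<open>S'\<close> is the other short-leg class.\<close>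

definition branches :: "(mat3 \<times> mat3 \<times> trip set \<times> trip set) set" where
  "branches = {(matA, matC, PPT_short_odd, PPT_short_even), (matC, matA, PPT_short_even, PPT_short_odd)}"

lemma branchesD:
  assumes "(Z, W, S, S') \<in> branches"
  shows "{Z, W} = {matA, matC}" "S \<subseteq> PPT" "Z *v trip 1 0 1 \<notin> S"
  using assms root_not_in_PPT
  by (auto simp: branches_def PPT_short_odd_def PPT_short_even_def Berggren_root)

lemma branch_short_iff:
  assumes "(Z, W, S, S') \<in> branches" "v \<in> PPT"
  shows "Z *v v \<in> S \<longleftrightarrow> v \<notin> S'" "W *v v \<in> S' \<longleftrightarrow> v \<notin> S"
  using assms matA_short_odd_iff matC_short_even_iff by (auto simp: branches_def)

lemma branch_not_short:
  assumes "(Z, W, S, S') \<in> branches" "v \<in> PPT'"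
  shows "Z *v v \<notin> S'" "W *v v \<notin> S" "matB *v v \<notin> S" "matB *v v \<notin> S'"
proof -
  from assms(2) obtain x y z where "v = trip x y z" "x > 0" "y \<ge> 0" "z > 0"
    unfolding PPT'_iff by (auto elim: PPTE)
  with assms(1) show "Z *v v \<notin> S'" "W *v v \<notin> S" "matB *v v \<notin> S" "matB *v v \<notin> S'"
    by (auto simp: branches_def PPT_short_odd_def PPT_short_even_def matA_trip matB_trip matC_trip)
qed

lemma Hbase_short:
  assumes br: "(Z, W, S, S') \<in> branches" and "T \<in> Hbase Z" "v \<in> PPT'"
  shows "T *v v \<in> S"
proof -
  have Z: "Z \<in> {matA, matB, matC}"
    using branchesD(1)[OF br] by auto
  have Bv: "matB *v v \<in> PPT"
    using assms(3) by (rule matB_PPT')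
  have "\<exists>u. T *v v = Z *v u \<and> u \<in> PPT \<and> u \<notin> S'"
  proof (cases "T = Z ** matB")
    case True
    with assms(3) Bv branch_not_short[OF br] show ?thesis
      by (auto simp flip: matrix_vector_mul_assoc)
  next
    case False
    with assms(2) obtain X N where X: "X \<in> {Z, matB}" and "N \<in> monG" and T: "T = Z ** X ** N ** matB"
      by (auto simp: Hbase_def)
    define u where "u = N *v (matB *v v)"
    have "u \<in> PPT"
      unfolding u_def using \<open>N \<in> monG\<close> Bv by (rule monG_PPT)
    with X Z have "X *v u \<in> PPT" "X *v u \<notin> S'"
      using Berggren_PPT branch_not_short(1,4)[OF br, of u] by (auto simp: PPT'_iff)
    moreover have "T *v v = Z *v (X *v u)"
      by (simp add: T u_def matrix_vector_mul_assoc matrix_mul_assoc)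
    ultimately show ?thesis
      by blast
  qed
  then show ?thesis
    using branch_short_iff[OF br] by auto
qed

lemma Hbranch_short:
  assumes br: "(Z, W, S, S') \<in> branches" and "M \<in> Hbranch Z W" "v \<in> PPT'"
  shows "M *v v \<in> S"
proof -
  obtain k T where M: "M = mpow (Z ** W) k ** T" and "T \<in> Hbase Z"
    using assms(2) by (auto simp: Hbranch_def)
  have "Z ** W *v u \<in> S" if "u \<in> S" for u
  proof -
    have "u \<in> PPT" "W \<in> {matA, matB, matC}"
      using that branchesD(1,2)[OF br] by auto
    then show ?thesis
      using that branch_short_iff[OF br] Berggren_PPT[of W u]
      by (auto simp flip: matrix_vector_mul_assoc)
  qed
  with Hbase_short[OF br \<open>T \<in> Hbase Z\<close> assms(3)] show ?thesis
    unfolding M by (simp add: mpow_invariant flip: matrix_vector_mul_assoc)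
qed

lemma Hbase_orbit:
  assumes "X \<in> {Z, matB}" "v \<in> PPT"
  shows "\<exists>T\<in>Hbase Z. Z *v (X *v v) = T *v trip 1 0 1"
proof -
  obtain N where "N \<in> monG" "v = (N ** matB) *v trip 1 0 1"
    using PPT_monG_orbit[OF assms(2)] by blast
  with assms(1) show ?thesis
    by (intro bexI[of _ "Z ** X ** N ** matB"])
      (auto simp: Hbase_def matrix_vector_mul_assoc matrix_mul_assoc)
qed

lemma branch_parent:
  assumes br: "(Z, W, S, S') \<in> branches" and "w \<in> S"
  obtains u where "w = Z *v u" "u \<in> PPT" "u \<notin> S'" "u$3 < w$3"
proof -
  have "w \<in> PPT"
    using assms(2) branchesD(2)[OF br] by blast
  then obtain u where u: "u \<in> PPT'" "u$3 < w$3"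
    and "w = matA *v u \<or> w = matB *v u \<or> w = matC *v u"
    by (rule PPT_descent)
  with branchesD(1)[OF br] have "w = Z *v u \<or> w = matB *v u \<or> w = W *v u"
    by (auto simp: doubleton_eq_iff)
  with assms(2) branch_not_short[OF br u(1)] have w: "w = Z *v u"
    by auto
  with assms(2) branchesD(3)[OF br] u(1) have "u \<in> PPT"
    by (auto simp: PPT'_iff)
  with w assms(2) branch_short_iff(1)[OF br] u(2) that show ?thesis
    by blast
qed

lemma short_in_Hbranch:
  assumes br: "(Z, W, S, S') \<in> branches" and "w \<in> S"
  shows "\<exists>M\<in>Hbranch Z W. w = M *v trip 1 0 1"
  using assms(2)
proof (induction "nat (w$3)" arbitrary: w rule: less_induct)
  case less
  obtain u where w: "w = Z *v u" and u: "u \<in> PPT" "u \<notin> S'" "u$3 < w$3"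
    using br less.prems by (rule branch_parent)
  then obtain u' where u': "u' \<in> PPT'" "u'$3 < u$3"
    and "u = matA *v u' \<or> u = matB *v u' \<or> u = matC *v u'"
    by (elim PPT_descent)
  with branchesD(1)[OF br] \<open>u \<in> PPT\<close> consider
      (root) "u = matB *v trip 1 0 1"
    | (base) X where "X \<in> {Z, matB}" "u' \<in> PPT" "u = X *v u'"
    | (step) "u' \<in> PPT" "u = W *v u'"
    using root_not_in_PPT by (auto simp: doubleton_eq_iff PPT'_iff Berggren_root)
  then show ?case
  proof cases
    case root
    then have "w = (Z ** matB) *v trip 1 0 1"
      by (simp add: w matrix_vector_mul_assoc)
    then show ?thesis
      using Hbase_subset_Hbranch by (force simp: Hbase_def)
  next
    case (base X)
    then show ?thesis
      using Hbase_orbit[of X Z u'] Hbase_subset_Hbranch w by blast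
  next
    case step
    with w less.prems have "u' \<in> S"
      using u(2) branch_short_iff(2)[OF br \<open>u' \<in> PPT\<close>] by simp
    moreover have "nat (u'$3) < nat (w$3)"
      using u u' \<open>u' \<in> PPT\<close> by (auto elim: PPTE)
    ultimately obtain M where "M \<in> Hbranch Z W" "u' = M *v trip 1 0 1"
      using less.hyps by blast
    with step w show ?thesis
      by (intro bexI[of _ "Z ** W ** M"] Hbranch_step)
        (auto simp: matrix_vector_mul_assoc matrix_mul_assoc)
  qed
qed

lemma act_set_mono: "Y \<subseteq> Y' \<Longrightarrow> act_set X Y \<subseteq> act_set X Y'"
  unfolding act_set_def by blast

theorem lemma2p1:
  shows "act_set setH PPT' = act_set setH PPTsmall \<and>
         act_set setH PPTsmall = PPTsmall - {trip 1 0 1}"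
proof -
  have br: "(matA, matC, PPT_short_odd, PPT_short_even) \<in> branches"
    "(matC, matA, PPT_short_even, PPT_short_odd) \<in> branches"
    by (simp_all add: branches_def)
  have setH: "setH = Hbranch matA matC \<union> Hbranch matC matA"
    using Hbranch_subset_setH setH_subset_Hbranch by blast
  have upper: "act_set setH PPT' \<subseteq> PPTsmall - {trip 1 0 1}"
    unfolding PPTsmall_minus_root act_set_def setH
    using Hbranch_short[OF br(1)] Hbranch_short[OF br(2)] by blast
  have lower: "PPTsmall - {trip 1 0 1} \<subseteq> act_set setH {trip 1 0 1}"
    unfolding PPTsmall_minus_root act_set_def setH
    using short_in_Hbranch[OF br(1)] short_in_Hbranch[OF br(2)] by blast
  have "{trip 1 0 1} \<subseteq> PPTsmall"
    by (simp add: PPTsmall_def)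
  moreover have "PPTsmall \<subseteq> PPT'"
    using PPTsmall_minus_root unfolding PPT'_def PPT_short_odd_def PPT_short_even_def by blast
  ultimately have "act_set setH {trip 1 0 1} \<subseteq> act_set setH PPTsmall"
    "act_set setH PPTsmall \<subseteq> act_set setH PPT'"
    by (simp_all add: act_set_mono)
  with upper lower show ?thesis
    by blast
qed

end
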